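(* Let $M$ (dimension $m$) and $N$ (dimension $n$) be smooth manifolds carrying torsion-free (symmetric) affine connections ${}^M\nabla$ and ${}^N\nabla$, with local components ${}^M\Gamma^k_{ij}(x)$ and ${}^N\Gamma^\sigma_{\alpha\lambda}(\phi)$ in local coordinates $(x^i)$ on $M$ and $(\phi^\sigma)$ on $N$. Consider the fibred manifold $\pi: M\times N\to M$ with adapted coordinates $(x^i,\phi^\sigma)$ and induced jet coordinates $\phi^\sigma_i,\phi^\sigma_{ij}$ on the second jet prolongation. Let $g^{ij}(x)$ be the components of a (symmetric, nondegenerate) inverse metric on $M$, and let $h_{\sigma\nu}(x,\phi)$ be smooth functions, symmetric in $\sigma,\nu$ and nondegenerate, so that for each fixed $x$ they are the components of a metric $h_x$ on $N$ (which may differ from fibre to fibre). Put $B^{ij}_{\sigma\nu}=g^{ij}(x)h_{\sigma\nu}(x,\phi)$ and consider the dynamical form $E=E_\nu\,\omega^\nu\wedge\omega_0$, where $\omega^\nu={\rm d}\phi^\nu-\phi^\nu_i{\rm d}x^i$, $\omega_0={\rm d}x^1\wedge\cdots\wedge{\rm d}x^m$, and $$E_\nu=B^{ij}_{\sigma\nu}\left(\phi^\sigma_{ij}-{}^M\Gamma^k_{ij}\phi^\sigma_k+{}^N\Gamma^\sigma_{\alpha\lambda}\phi^\alpha_i\phi^\lambda_j\right).$$ Suppose that (1) for each fixed $x$, the connection ${}^N\nabla$ is compatible with the metric $h_x$, i.e. $\dfrac{\partial h_{\mu\nu}}{\partial\phi^\lambda}={}^N\Gamma^\sigma_{\mu\lambda}h_{\sigma\nu}+{}^N\Gamma^\sigma_{\nu\lambda}h_{\sigma\mu}$;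 and (2) the dependence of $h$ on the base coordinates is governed by ${}^M\nabla$ and $g$ via $$h_{\mu\nu}\left(g^{ij}\,{}^M\Gamma^l_{ij}+\frac{\partial g^{lp}}{\partial x^p}\right)=-\frac{\partial h_{\mu\nu}}{\partial x^p}\,g^{lp}\quad\text{for all } l,\mu,\nu;$$ equivalently, writing ${}^M\Gamma^l_{ij}={}^M\bar\Gamma^l_{ij}+S^l_{ij}$ with ${}^M\bar\Gamma$ the Levi-Civita connection of $g$ and $S$ a tensor, $g^{ij}S^l_{ij}=-\frac{1}{n}h^{\mu\nu}\frac{\partial h_{\mu\nu}}{\partial x^p}g^{lp}$. Then the dynamical form $E$ is variational, i.e. $B=g\otimes h$ solves the weak inverse problem of the calculus of variations for the geodesic mapping equations $\phi^\sigma_{ij}-{}^M\Gamma^k_{ij}\phi^\sigma_k+{}^N\Gamma^\sigma_{\alpha\lambda}\phi^\alpha_i\phi^\lambda_j=0$. In particular ${}^N\nabla$ must be metric (fibrewise), whereas ${}^M\nabla$ need not be the Levi-Civita connection of $g$.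
   Context: A map $\phi:M\to N$ (immersion, $\dim M\le\dim N$) between manifolds with affine connections is called geodesic if it maps every geodesic curve of $(M,{}^M\nabla)$ to a geodesic curve of $(N,{}^N\nabla)$ (with the same parameter); a sufficient condition is the system $\phi^\sigma_{ij}-{}^M\Gamma^k_{ij}\phi^\sigma_k+{}^N\Gamma^\sigma_{\alpha\lambda}\phi^\alpha_i\phi^\lambda_j=0$. A dynamical form $E=E_\nu\,\omega^\nu\wedge\omega_0$ on the second jet prolongation of $M\times N\to M$ is called variational if it is (locally) the Euler–Lagrange form of some Lagrangian, i.e. $E_\nu=\frac{\partial L}{\partial\phi^\nu}-{\rm d}_k\frac{\partial L}{\partial\phi^\nu_k}+\dots$ for some Lagrangian $L$; the weak inverse problem asks for a multiplier $B^{ij}_{\sigma\nu}(x,\phi)$ (independent of derivatives) making the multiplied equations variational. Here ${\rm d}_k$ denotes the total derivative. *)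

theory Defs
  imports "HOL-Analysis.Analysis"
begin

text \<open>Coordinates on M are x :: real^'m (index type 'm, dimension
CARD('m)), coordinates on N are y :: real^'n. A section of M x N -> M is a map
gamma :: real^'m => real^'n (gamma x $ s = phi^s(x)).\<close>

definition dirderiv :: "('a::real_normed_vector \<Rightarrow> real) \<Rightarrow> 'a \<Rightarrow> 'a \<Rightarrow> real" where
  "dirderiv f v z = deriv (\<lambda>t. f (z + t *\<^sub>R v)) 0"

definition pd :: "(real^'a \<Rightarrow> real) \<Rightarrow> 'a \<Rightarrow> real^'a \<Rightarrow> real" where
  "pd f i z = dirderiv f (axis i 1) z"

text \<open>C-infinity on a set U (meant for open U): differentiable, and all coordinate partial
derivatives are again C-infinity.\<close>
coinductive smooth_on :: "'a::euclidean_space set \<Rightarrow> ('a \<Rightarrow> real) \<Rightarrow> bool" for U where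
  "f differentiable_on U \<Longrightarrow> (\<forall>b\<in>Basis. smooth_on U (dirderiv f b)) \<Longrightarrow> smooth_on U f"

text \<open>First jet prolongation of a section: ((x, phi), phi^s_i) with (p $ i $ s) = phi^s_i.\<close>
definition jet1 :: "(real^'m \<Rightarrow> real^'n) \<Rightarrow> real^'m \<Rightarrow> ((real^'m) \<times> (real^'n)) \<times> ((real^'n)^'m)" where
  "jet1 \<gamma> x = ((x, \<gamma> x), \<chi> i. \<chi> s. pd (\<lambda>z. \<gamma> z $ s) i x)"

text \<open>Euler--Lagrange expressions of a (first order) Lagrangian L(x, phi, phi_i), evaluated
along a section: dL/dphi^nu - d_k dL/dphi^nu_k, where the total derivative d_k along the
prolonged section is the partial derivative in x^k of the composite.\<close>
definition EL :: "(((real^'m) \<times> (real^'n)) \<times> ((real^'n)^'m) \<Rightarrow> real) \<Rightarrow> (real^'m \<Rightarrow> real^'n)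
                   \<Rightarrow> 'n \<Rightarrow> real^'m \<Rightarrow> real" where
  "EL L \<gamma> \<nu> x =
     dirderiv L ((0, axis \<nu> 1), 0) (jet1 \<gamma> x)
     - (\<Sum>k\<in>UNIV. pd (\<lambda>z. dirderiv L ((0, 0), axis k (axis \<nu> 1)) (jet1 \<gamma> z)) k x)"

text \<open>A dynamical form, given by its components E gamma nu x (the component E_nu evaluated on the
2-jet of gamma at x), defined on the chart domain U x V, is (locally) variational if around every
point of U x V there is a Lagrangian whose Euler--Lagrange expressions coincide with E.\<close>
definition locally_variational ::
  "(real^'m) set \<Rightarrow> (real^'n) set \<Rightarrow> ((real^'m \<Rightarrow> real^'n) \<Rightarrow> 'n \<Rightarrow> real^'m \<Rightarrow> real) \<Rightarrow> bool" where
  "locally_variational U V E \<longleftrightarrow>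
    (\<forall>x0\<in>U. \<forall>y0\<in>V. \<exists>W L. open W \<and> (x0, y0) \<in> W \<and> W \<subseteq> U \<times> V \<and>
       smooth_on (W \<times> UNIV) L \<and>
       (\<forall>\<gamma> Q x. open Q \<and> x \<in> Q \<and> (\<forall>s. smooth_on Q (\<lambda>z. \<gamma> z $ s)) \<and>
                 (\<forall>z\<in>Q. (z, \<gamma> z) \<in> W) \<longrightarrow> (\<forall>\<nu>. E \<gamma> \<nu> x = EL L \<gamma> \<nu> x)))"

text \<open>The multiplied geodesic-map dynamical form
 E_nu = g^{ij} h_{s nu} (phi^s_{ij} - GM^k_{ij} phi^s_k + GN^s_{a l} phi^a_i phi^l_j),
with GM x k i j = Gamma^k_{ij}(x), GN y s a l = Gamma^s_{al}(y).\<close>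
definition geodesic_form ::
  "(real^'m \<Rightarrow> 'm \<Rightarrow> 'm \<Rightarrow> real) \<Rightarrow> (real^'m \<Rightarrow> real^'n \<Rightarrow> 'n \<Rightarrow> 'n \<Rightarrow> real)
   \<Rightarrow> (real^'m \<Rightarrow> 'm \<Rightarrow> 'm \<Rightarrow> 'm \<Rightarrow> real) \<Rightarrow> (real^'n \<Rightarrow> 'n \<Rightarrow> 'n \<Rightarrow> 'n \<Rightarrow> real)
   \<Rightarrow> (real^'m \<Rightarrow> real^'n) \<Rightarrow> 'n \<Rightarrow> real^'m \<Rightarrow> real" where
  "geodesic_form g h GM GN \<gamma> \<nu> x =
     (\<Sum>s\<in>UNIV. \<Sum>i\<in>UNIV. \<Sum>j\<in>UNIV. g x i j * h x (\<gamma> x) s \<nu> *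
        (pd (pd (\<lambda>z. \<gamma> z $ s) j) i x
         - (\<Sum>k\<in>UNIV. GM x k i j * pd (\<lambda>z. \<gamma> z $ s) k x)
         + (\<Sum>a\<in>UNIV. \<Sum>l\<in>UNIV. GN (\<gamma> x) s a l * pd (\<lambda>z. \<gamma> z $ a) i x * pd (\<lambda>z. \<gamma> z $ l) j x)))"

end

theory Submission
  imports Defs
begin

(* E is the Euler-Lagrange form of L = -1/2 g^{ij} h_{su} phi^s_i phi^u_j.  Differentiating L in
   phi^nu gives -1/2 g^{ij} (d_nu h_{su}) phi^s_i phi^u_j; the total derivative d_k of the momentum
   dL/dphi^nu_k = -g^{jk} h_{u nu} phi^u_j gives the second-order part of E together with terms in
   d_k g^{jk}, in the x-derivatives of h and in the phi-derivatives of h.  Condition (2) turns the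
   first two kinds into the trace g^{ij} Gamma^k_{ij} of the connection on M.  Metricity (1)
   expresses the phi-derivatives of h through the lowered symbols h_{s nu} Gamma^s_{al}; as
   g^{ij} phi^a_i phi^l_j and Gamma^s_{al} are symmetric in (a, l), these terms add up to the
   Gamma^N-term of E.  L is smooth, being a polynomial in smooth functions composed with linear
   maps. *)

section \<open>Directional and partial derivatives\<close>

lemma has_real_derivative_line:
  fixes f :: "'a::real_normed_vector \<Rightarrow> real"
  assumes "(f has_derivative D) (at z)"
  shows "((\<lambda>t. f (z + t *\<^sub>R v)) has_real_derivative D v) (at 0)"
proof -
  have "((\<lambda>t. z + t *\<^sub>R v) has_derivative (\<lambda>t. t *\<^sub>R v)) (at 0)"
    by (auto intro!: derivative_eq_intros)
  from has_derivative_compose[OF this, of f D] assms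
  have "((\<lambda>t. f (z + t *\<^sub>R v)) has_derivative (\<lambda>t. D (t *\<^sub>R v))) (at 0)" by simp
  then show ?thesis
    using linear_scale[OF has_derivative_linear[OF assms]]
    by (simp add: has_real_derivative_iff_has_vector_derivative has_vector_derivative_def mult.commute)
qed

lemma dirderiv_eq_has_derivative:
  fixes f :: "'a::real_normed_vector \<Rightarrow> real"
  assumes "(f has_derivative D) (at z)"
  shows "dirderiv f v z = D v"
  unfolding dirderiv_def using has_real_derivative_line[OF assms] by (rule DERIV_imp_deriv)

lemma has_real_derivative_dirderiv:
  fixes f :: "'a::real_normed_vector \<Rightarrow> real"
  assumes "f differentiable at z"
  shows "((\<lambda>t. f (z + t *\<^sub>R v)) has_real_derivative dirderiv f v z) (at 0)"
  using assms has_real_derivative_line dirderiv_eq_has_derivative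
  unfolding differentiable_def by metis

lemma dirderiv_cong:
  fixes f :: "'a::real_normed_vector \<Rightarrow> real"
  assumes "open Q" "z \<in> Q" "\<And>w. w \<in> Q \<Longrightarrow> f w = g w"
  shows "dirderiv f v z = dirderiv g v z"
  unfolding dirderiv_def
proof (rule deriv_cong_ev[OF _ refl])
  have "isCont (\<lambda>t. z + t *\<^sub>R v) 0" by (intro continuous_intros)
  then have "\<forall>\<^sub>F t in nhds 0. z + t *\<^sub>R v \<in> Q"
    using assms(1,2) by (simp add: isCont_def tendsto_def eventually_nhds_conv_at)
  then show "\<forall>\<^sub>F t in nhds 0. f (z + t *\<^sub>R v) = g (z + t *\<^sub>R v)"
    by eventually_elim (use assms(3) in auto)
qed

lemma dirderiv_const: "dirderiv (\<lambda>z. c) v z = 0"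
  unfolding dirderiv_def by simp

lemma dirderiv_add:
  fixes f g :: "'a::real_normed_vector \<Rightarrow> real"
  assumes "f differentiable at z" "g differentiable at z"
  shows "dirderiv (\<lambda>z. f z + g z) v z = dirderiv f v z + dirderiv g v z"
proof -
  have "((\<lambda>t. f (z + t *\<^sub>R v) + g (z + t *\<^sub>R v)) has_real_derivative
      dirderiv f v z + dirderiv g v z) (at 0)"
    by (intro DERIV_add has_real_derivative_dirderiv assms)
  then show ?thesis unfolding dirderiv_def by (simp add: DERIV_imp_deriv)
qed

lemma dirderiv_mult:
  fixes f g :: "'a::real_normed_vector \<Rightarrow> real"
  assumes "f differentiable at z" "g differentiable at z"
  shows "dirderiv (\<lambda>z. f z * g z) v z = dirderiv f v z * g z + f z * dirderiv g v z"
proof -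
  have "((\<lambda>t. f (z + t *\<^sub>R v) * g (z + t *\<^sub>R v)) has_real_derivative
      dirderiv f v z * g z + dirderiv g v z * f z) (at 0)"
    using DERIV_mult[OF has_real_derivative_dirderiv[OF assms(1)] has_real_derivative_dirderiv[OF assms(2)]]
    by simp
  then show ?thesis unfolding dirderiv_def by (simp add: DERIV_imp_deriv mult.commute)
qed

lemma dirderiv_compose_linear:
  assumes "linear T"
  shows "dirderiv (\<lambda>z. f (T z)) v z = dirderiv f (T v) (T z)"
proof -
  have "T (z + t *\<^sub>R v) = T z + t *\<^sub>R T v" for t
    using assms by (simp add: linear_add linear_scale)
  then show ?thesis unfolding dirderiv_def by simp
qed

lemma dirderiv_basis_expansion:
  fixes f :: "'a::euclidean_space \<Rightarrow> real"
  assumes "f differentiable at z"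
  shows "dirderiv f v z = (\<Sum>d\<in>Basis. (v \<bullet> d) * dirderiv f d z)"
proof -
  obtain D where D: "(f has_derivative D) (at z)"
    using assms unfolding differentiable_def by blast
  have "D v = D (\<Sum>d\<in>Basis. (v \<bullet> d) *\<^sub>R d)"
    by (simp add: euclidean_representation)
  also have "\<dots> = (\<Sum>d\<in>Basis. (v \<bullet> d) * D d)"
    using has_derivative_linear[OF D] by (simp add: linear_sum linear_scale)
  finally show ?thesis
    using dirderiv_eq_has_derivative[OF D] by simp
qed

lemma pd_eqI:
  assumes "((\<lambda>t. f (x + t *\<^sub>R axis k 1)) has_real_derivative D) (at 0)"
  shows "pd f k x = D"
  unfolding pd_def dirderiv_def using assms by (rule DERIV_imp_deriv)

lemma pd_cong:
  assumes "open Q" "x \<in> Q" "\<And>z. z \<in> Q \<Longrightarrow> f z = f' z"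
  shows "pd f k x = pd f' k x"
  unfolding pd_def using dirderiv_cong[OF assms] .

lemma has_derivative_vec_componentwise:
  fixes f :: "'a::real_normed_vector \<Rightarrow> real^'n"
  assumes "\<And>s. ((\<lambda>z. f z $ s) has_derivative D s) (at x)"
  shows "(f has_derivative (\<lambda>w. \<chi> s. D s w)) (at x)"
  using assms by (subst has_derivative_componentwise_within) (auto simp: Basis_vec_def inner_axis)

lemma has_real_derivative_along_section:
  fixes H :: "(real^'a) \<times> (real^'b) \<Rightarrow> real" and \<gamma> :: "real^'a \<Rightarrow> real^'b"
  assumes H: "H differentiable at (x, \<gamma> x)"
    and \<gamma>: "\<And>l. (\<lambda>z. \<gamma> z $ l) differentiable at x"
  shows "((\<lambda>t. H (x + t *\<^sub>R axis k 1, \<gamma> (x + t *\<^sub>R axis k 1))) has_real_derivative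
     pd (\<lambda>x'. H (x', \<gamma> x)) k x + (\<Sum>l\<in>UNIV. pd (\<lambda>y'. H (x, y')) l (\<gamma> x) * pd (\<lambda>z. \<gamma> z $ l) k x)) (at 0)"
proof -
  obtain D where D: "(H has_derivative D) (at (x, \<gamma> x))"
    using H unfolding differentiable_def by blast
  obtain G where G: "\<And>l. ((\<lambda>z. \<gamma> z $ l) has_derivative G l) (at x)"
    using \<gamma> unfolding differentiable_def by metis
  have "((\<lambda>z. (z, \<gamma> z)) has_derivative (\<lambda>w. (w, \<chi> l. G l w))) (at x)"
    by (intro has_derivative_Pair has_derivative_ident has_derivative_vec_componentwise G)
  from has_derivative_compose[OF this D]
  have "((\<lambda>t. H (x + t *\<^sub>R axis k 1, \<gamma> (x + t *\<^sub>R axis k 1))) has_real_derivative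
      D (axis k 1, \<chi> l. G l (axis k 1))) (at 0)"
    using has_real_derivative_line by fastforce
  moreover have "D (axis k 1, \<chi> l. G l (axis k 1))
      = D (axis k 1, 0) + (\<Sum>l\<in>UNIV. G l (axis k 1) * D (0, axis l 1))"
  proof -
    have "(\<chi> l. G l (axis k 1)) = (\<Sum>l\<in>UNIV. G l (axis k 1) *\<^sub>R (axis l 1 :: real^'b))"
      using basis_expansion[of "\<chi> l. G l (axis k 1)"] by (simp add: scalar_mult_eq_scaleR)
    then have split: "(axis k 1, \<chi> l. G l (axis k 1))
        = (axis k 1, 0) + (\<Sum>l\<in>UNIV. G l (axis k 1) *\<^sub>R (0, axis l 1))"
      by (simp add: prod_eq_iff fst_sum snd_sum)
    have "linear D" using has_derivative_linear[OF D] .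
    then show ?thesis
      unfolding split by (simp add: linear_add linear_sum linear_scale del: scaleR_Pair)
  qed
  moreover have "D (axis k 1, 0) = pd (\<lambda>x'. H (x', \<gamma> x)) k x"
    using dirderiv_eq_has_derivative[OF D, of "(axis k 1, 0)"] unfolding pd_def dirderiv_def by simp
  moreover have "D (0, axis l 1) = pd (\<lambda>y'. H (x, y')) l (\<gamma> x)" for l
    using dirderiv_eq_has_derivative[OF D, of "(0, axis l 1)"] unfolding pd_def dirderiv_def by simp
  moreover have "G l (axis k 1) = pd (\<lambda>z. \<gamma> z $ l) k x" for l
    using dirderiv_eq_has_derivative[OF G[of l], of "axis k 1"] unfolding pd_def by simp
  ultimately show ?thesis by (simp add: mult.commute)
qed

section \<open>Smoothness of polynomial expressions\<close>

lemma smooth_on_imp_differentiable: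
  "smooth_on U f \<Longrightarrow> open U \<Longrightarrow> x \<in> U \<Longrightarrow> f differentiable at x"
  by (erule smooth_on.cases) (simp add: differentiable_on_eq_differentiable_at)

lemma smooth_on_dirderiv: "smooth_on U f \<Longrightarrow> b \<in> Basis \<Longrightarrow> smooth_on U (dirderiv f b)"
  by (erule smooth_on.cases) simp

inductive_set poly_closure :: "('a \<Rightarrow> real) set \<Rightarrow> ('a \<Rightarrow> real) set" for B where
  base: "f \<in> B \<Longrightarrow> f \<in> poly_closure B"
| const: "(\<lambda>z. c) \<in> poly_closure B"
| add: "f \<in> poly_closure B \<Longrightarrow> g \<in> poly_closure B \<Longrightarrow> (\<lambda>z. f z + g z) \<in> poly_closure B"
| mult: "f \<in> poly_closure B \<Longrightarrow> g \<in> poly_closure B \<Longrightarrow> (\<lambda>z. f z * g z) \<in> poly_closure B"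

lemma poly_closure_sum:
  "finite A \<Longrightarrow> (\<And>i. i \<in> A \<Longrightarrow> G i \<in> poly_closure B) \<Longrightarrow> (\<lambda>z. \<Sum>i\<in>A. G i z) \<in> poly_closure B"
proof (induction A rule: finite_induct)
  case empty
  then show ?case using poly_closure.const[of 0] by simp
next
  case (insert x F)
  then show ?case using poly_closure.add[of "G x" B "\<lambda>z. \<Sum>i\<in>F. G i z"] by simp
qed

definition agrees_with_poly_closure :: "'a set \<Rightarrow> ('a \<Rightarrow> real) set \<Rightarrow> ('a \<Rightarrow> real) \<Rightarrow> bool" where
  "agrees_with_poly_closure S B f \<longleftrightarrow> (\<exists>a\<in>poly_closure B. \<forall>z\<in>S. f z = a z)"

lemma poly_closure_differentiable_dirderiv:
  assumes "a \<in> poly_closure B"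
    and B_diff: "\<And>b z. b \<in> B \<Longrightarrow> z \<in> S \<Longrightarrow> b differentiable at z"
    and B_dirderiv: "\<And>b c. b \<in> B \<Longrightarrow> c \<in> Basis \<Longrightarrow> agrees_with_poly_closure S B (dirderiv b c)"
  shows "(\<forall>z\<in>S. a differentiable at z) \<and> (\<forall>c\<in>Basis. agrees_with_poly_closure S B (dirderiv a c))"
  using assms(1)
proof (induction rule: poly_closure.induct)
  case (base f)
  then show ?case using B_diff B_dirderiv by blast
next
  case (const k)
  then show ?case
    using poly_closure.const[of 0 B] by (auto simp: dirderiv_const agrees_with_poly_closure_def)
next
  case (add f g)
  have "agrees_with_poly_closure S B (dirderiv (\<lambda>z. f z + g z) c)" if c: "c \<in> Basis" for c
  proof -
    obtain f' g' where "f' \<in> poly_closure B" "g' \<in> poly_closure B"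
      "\<forall>z\<in>S. dirderiv f c z = f' z" "\<forall>z\<in>S. dirderiv g c z = g' z"
      using add c unfolding agrees_with_poly_closure_def by meson
    then show ?thesis
      using add unfolding agrees_with_poly_closure_def
      by (intro bexI[OF _ poly_closure.add[of f' B g']]) (auto simp: dirderiv_add)
  qed
  then show ?case using add by auto
next
  case (mult f g)
  have "agrees_with_poly_closure S B (dirderiv (\<lambda>z. f z * g z) c)" if c: "c \<in> Basis" for c
  proof -
    obtain f' g' where "f' \<in> poly_closure B" "g' \<in> poly_closure B"
      "\<forall>z\<in>S. dirderiv f c z = f' z" "\<forall>z\<in>S. dirderiv g c z = g' z"
      using mult c unfolding agrees_with_poly_closure_def by meson
    moreover have "(\<lambda>z. f' z * g z + f z * g' z) \<in> poly_closure B"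
      using calculation mult.hyps by (intro poly_closure.add poly_closure.mult)
    ultimately show ?thesis
      using mult unfolding agrees_with_poly_closure_def
      by (intro bexI[of _ "\<lambda>z. f' z * g z + f z * g' z"]) (auto simp: dirderiv_mult)
  qed
  then show ?case using mult by auto
qed

lemma smooth_on_poly_closure:
  fixes S :: "'a::euclidean_space set"
  assumes S: "open S" and a: "a \<in> poly_closure B"
    and B_diff: "\<And>b z. b \<in> B \<Longrightarrow> z \<in> S \<Longrightarrow> b differentiable at z"
    and B_dirderiv: "\<And>b c. b \<in> B \<Longrightarrow> c \<in> Basis \<Longrightarrow> agrees_with_poly_closure S B (dirderiv b c)"
  shows "smooth_on S a"
proof -
  (* Coinduction: agreeing on S with a polynomial in B is preserved under partial derivatives. *)
  have "agrees_with_poly_closure S B a"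
    using a unfolding agrees_with_poly_closure_def by blast
  then show ?thesis
  proof (coinduction arbitrary: a rule: smooth_on.coinduct)
    case (smooth_on f)
    then obtain a where a: "a \<in> poly_closure B" and fa: "\<forall>z\<in>S. f z = a z"
      unfolding agrees_with_poly_closure_def by blast
    note a_props = poly_closure_differentiable_dirderiv[OF a B_diff B_dirderiv]
    have "f differentiable at z" if z: "z \<in> S" for z
    proof -
      obtain D where "(a has_derivative D) (at z)"
        using a_props z unfolding differentiable_def by blast
      then have "(f has_derivative D) (at z)"
        by (rule has_derivative_transform_within_open[OF _ S z]) (use fa in auto)
      then show ?thesis unfolding differentiable_def by blast
    qed
    moreover have "agrees_with_poly_closure S B (dirderiv f c)" if "c \<in> Basis" for c
    proof -
      have "\<forall>z\<in>S. dirderiv f c z = dirderiv a c z"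
        using dirderiv_cong[OF S] fa by blast
      then show ?thesis
        using a_props that unfolding agrees_with_poly_closure_def by auto
    qed
    ultimately show ?case
      unfolding differentiable_on_eq_differentiable_at[OF S] by blast
  qed
qed

lemma smooth_on_poly_closure_of_smooth:
  fixes S :: "'a::euclidean_space set"
  assumes S: "open S" and f: "f \<in> poly_closure {f. smooth_on S f}"
  shows "smooth_on S f"
proof (rule smooth_on_poly_closure[OF S f])
  fix b z assume "b \<in> {f. smooth_on S f}" "z \<in> S"
  then show "b differentiable at z"
    using smooth_on_imp_differentiable S by blast
next
  fix b and c :: 'a assume "b \<in> {f. smooth_on S f}" "c \<in> Basis"
  then have "dirderiv b c \<in> poly_closure {f. smooth_on S f}"
    by (intro poly_closure.base) (simp add: smooth_on_dirderiv)
  then show "agrees_with_poly_closure S {f. smooth_on S f} (dirderiv b c)"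
    unfolding agrees_with_poly_closure_def by blast
qed

lemma smooth_on_linear:
  fixes S :: "'a::euclidean_space set"
  assumes S: "open S" and f: "linear f"
  shows "smooth_on S f"
proof (rule smooth_on_poly_closure[OF S poly_closure.base[of f "{f}"]])
  have D: "(f has_derivative f) (at z)" for z
    using f by (rule linear_imp_has_derivative)
  fix b z c assume "b \<in> {f}"
  then have b: "b = f" by simp
  show "b differentiable at z"
    unfolding b differentiable_def using D by blast
  have "dirderiv b c = (\<lambda>z. f c)"
    unfolding b using dirderiv_eq_has_derivative[OF D] by blast
  then show "agrees_with_poly_closure S {f} (dirderiv b c)"
    unfolding agrees_with_poly_closure_def using poly_closure.const[of "f c" "{f}"] by auto
qed simp

lemma smooth_on_compose_linear:
  fixes S :: "'a::euclidean_space set" and S' :: "'b::euclidean_space set"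
  assumes S: "open S" and S': "open S'" and T: "linear T" "T ` S \<subseteq> S'" and f: "smooth_on S' f"
  shows "smooth_on S (\<lambda>z. f (T z))"
proof -
  let ?B = "{\<lambda>z. f' (T z) | f'. smooth_on S' f'}"
  show ?thesis
  proof (rule smooth_on_poly_closure[OF S poly_closure.base])
    show "(\<lambda>z. f (T z)) \<in> ?B" using f by blast
  next
    fix b z assume "b \<in> ?B" and z: "z \<in> S"
    then obtain f' where b: "b = (\<lambda>z. f' (T z))" "smooth_on S' f'" by blast
    have "f' differentiable at (T z)"
      using smooth_on_imp_differentiable[OF b(2) S'] T(2) z by blast
    from differentiable_chain_at[OF linear_imp_differentiable[OF T(1)] this]
    show "b differentiable at z"
      unfolding b(1) o_def .
  next
    fix b and c :: 'a assume "b \<in> ?B"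
    then obtain f' where b: "b = (\<lambda>z. f' (T z))" "smooth_on S' f'" by blast
    have "(\<lambda>z. dirderiv f' d (T z)) \<in> ?B" if "d \<in> Basis" for d
      unfolding mem_Collect_eq using smooth_on_dirderiv[OF b(2) that] by (intro exI conjI) (rule refl)
    then have "(\<lambda>z. (T c \<bullet> d) * dirderiv f' d (T z)) \<in> poly_closure ?B" if "d \<in> Basis" for d
      by (rule poly_closure.mult[OF poly_closure.const poly_closure.base]) (rule that)
    then have expansion_in: "(\<lambda>z. \<Sum>d\<in>Basis. (T c \<bullet> d) * dirderiv f' d (T z)) \<in> poly_closure ?B"
      by (rule poly_closure_sum[OF finite_Basis])
    have "dirderiv b c z = (\<Sum>d\<in>Basis. (T c \<bullet> d) * dirderiv f' d (T z))" if "z \<in> S" for z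
      unfolding b(1) dirderiv_compose_linear[OF T(1)]
      using that T S' b(2) by (intro dirderiv_basis_expansion smooth_on_imp_differentiable) auto
    then show "agrees_with_poly_closure S ?B (dirderiv b c)"
      unfolding agrees_with_poly_closure_def by (intro bexI[OF _ expansion_in]) simp
  qed
qed

section \<open>Index identities\<close>

lemma sum_if_zero: "(\<Sum>x\<in>A. if P then f x else 0) = (if P then sum f A else 0)"
  by simp

lemma sum_rotate3:
  "(\<Sum>a\<in>A. \<Sum>b\<in>B. \<Sum>c\<in>C. f a b c) = (\<Sum>b\<in>B. \<Sum>c\<in>C. \<Sum>a\<in>A. f a b c)"
  by (subst sum.swap) (rule sum.cong[OF refl sum.swap])

lemma sum_quadratic_contract:
  fixes g :: "'i \<Rightarrow> 'i \<Rightarrow> 'a::comm_semiring_0"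
  shows "(\<Sum>i\<in>I. \<Sum>j\<in>I. \<Sum>s\<in>S. \<Sum>u\<in>S. g i j * F s u * P s i * P u j)
     = (\<Sum>s\<in>S. \<Sum>u\<in>S. F s u * (\<Sum>i\<in>I. \<Sum>j\<in>I. g i j * P s i * P u j))"
proof -
  have "(\<Sum>s\<in>S. \<Sum>u\<in>S. F s u * (\<Sum>i\<in>I. \<Sum>j\<in>I. g i j * P s i * P u j))
      = (\<Sum>s\<in>S. \<Sum>u\<in>S. \<Sum>i\<in>I. \<Sum>j\<in>I. g i j * F s u * P s i * P u j)"
    by (simp add: sum_distrib_left mult_ac)
  also have "\<dots> = (\<Sum>s\<in>S. \<Sum>i\<in>I. \<Sum>j\<in>I. \<Sum>u\<in>S. g i j * F s u * P s i * P u j)"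
    by (rule sum.cong[OF refl sum_rotate3])
  also have "\<dots> = (\<Sum>i\<in>I. \<Sum>j\<in>I. \<Sum>s\<in>S. \<Sum>u\<in>S. g i j * F s u * P s i * P u j)"
    by (rule sum_rotate3)
  finally show ?thesis ..
qed

(* C nu a l stands for the lowered symbol h_{s nu} Gamma^s_{al} and dh mu nu kappa for
   d_kappa h_{mu nu}; Q a l is the symmetric tensor g^{ij} phi^a_i phi^l_j. *)
lemma metric_connection_quadratic_identity:
  fixes Q :: "'n::finite \<Rightarrow> 'n \<Rightarrow> real" and C dh :: "'n \<Rightarrow> 'n \<Rightarrow> 'n \<Rightarrow> real"
  assumes Q_sym: "\<And>a l. Q a l = Q l a"
    and C_sym: "\<And>\<nu> a l. C \<nu> a l = C \<nu> l a"
    and dh: "\<And>\<mu> \<nu> \<kappa>. dh \<mu> \<nu> \<kappa> = C \<nu> \<mu> \<kappa> + C \<mu> \<nu> \<kappa>"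
  shows "(\<Sum>a\<in>UNIV. \<Sum>l\<in>UNIV. Q a l * C \<nu> a l)
     = -(1/2) * (\<Sum>s\<in>UNIV. \<Sum>u\<in>UNIV. Q s u * dh s u \<nu>) + (\<Sum>u\<in>UNIV. \<Sum>l\<in>UNIV. Q u l * dh u \<nu> l)"
proof -
  let ?X = "\<Sum>s\<in>UNIV. \<Sum>u\<in>UNIV. Q s u * C s u \<nu>"
  have "(\<Sum>s\<in>UNIV. \<Sum>u\<in>UNIV. Q s u * C u s \<nu>) = ?X"
    by (subst sum.swap) (simp add: Q_sym)
  then have "(\<Sum>s\<in>UNIV. \<Sum>u\<in>UNIV. Q s u * dh s u \<nu>) = 2 * ?X"
    by (simp add: dh distrib_left sum.distrib)
  moreover have "(\<Sum>u\<in>UNIV. \<Sum>l\<in>UNIV. Q u l * dh u \<nu> l)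
      = (\<Sum>a\<in>UNIV. \<Sum>l\<in>UNIV. Q a l * C \<nu> a l) + ?X"
    by (simp add: dh distrib_left sum.distrib C_sym[of _ \<nu>])
  ultimately show ?thesis by simp
qed

lemma base_connection_trace_identity:
  fixes gg :: "'m::finite \<Rightarrow> 'm \<Rightarrow> real" and hh :: "'n::finite \<Rightarrow> 'n \<Rightarrow> real"
    and Gm :: "'m \<Rightarrow> 'm \<Rightarrow> 'm \<Rightarrow> real" and P :: "'n \<Rightarrow> 'm \<Rightarrow> real"
    and dg :: "'m \<Rightarrow> 'm \<Rightarrow> real" and hx :: "'n \<Rightarrow> 'n \<Rightarrow> 'm \<Rightarrow> real"
  assumes base: "\<And>l \<mu>. hh \<mu> \<nu> * ((\<Sum>i\<in>UNIV. \<Sum>j\<in>UNIV. gg i j * Gm l i j) + (\<Sum>p\<in>UNIV. dg l p))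
      = - (\<Sum>p\<in>UNIV. hx \<mu> \<nu> p * gg l p)"
  shows "(\<Sum>s\<in>UNIV. \<Sum>i\<in>UNIV. \<Sum>j\<in>UNIV. gg i j * hh s \<nu> * (\<Sum>k\<in>UNIV. Gm k i j * P s k))
     = - (\<Sum>k\<in>UNIV. \<Sum>j\<in>UNIV. \<Sum>u\<in>UNIV. (dg j k * hh u \<nu> + gg j k * hx u \<nu> k) * P u j)"
proof -
  define tr where "tr k = (\<Sum>i\<in>UNIV. \<Sum>j\<in>UNIV. gg i j * Gm k i j)" for k
  have "(\<Sum>i\<in>UNIV. \<Sum>j\<in>UNIV. gg i j * hh s \<nu> * (\<Sum>k\<in>UNIV. Gm k i j * P s k))
      = (\<Sum>k\<in>UNIV. P s k * hh s \<nu> * tr k)" for s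
  proof -
    have "(\<Sum>i\<in>UNIV. \<Sum>j\<in>UNIV. gg i j * hh s \<nu> * (\<Sum>k\<in>UNIV. Gm k i j * P s k))
        = (\<Sum>i\<in>UNIV. \<Sum>j\<in>UNIV. \<Sum>k\<in>UNIV. P s k * hh s \<nu> * (gg i j * Gm k i j))"
      by (simp add: sum_distrib_left mult_ac)
    also have "\<dots> = (\<Sum>k\<in>UNIV. \<Sum>i\<in>UNIV. \<Sum>j\<in>UNIV. P s k * hh s \<nu> * (gg i j * Gm k i j))"
      by (rule sum_rotate3[symmetric])
    finally show ?thesis
      by (simp add: tr_def sum_distrib_left)
  qed
  then have lhs: "(\<Sum>s\<in>UNIV. \<Sum>i\<in>UNIV. \<Sum>j\<in>UNIV. gg i j * hh s \<nu> * (\<Sum>k\<in>UNIV. Gm k i j * P s k))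
      = (\<Sum>s\<in>UNIV. \<Sum>k\<in>UNIV. P s k * hh s \<nu> * tr k)"
    by simp
  have "(\<Sum>k\<in>UNIV. \<Sum>j\<in>UNIV. \<Sum>u\<in>UNIV. (dg j k * hh u \<nu> + gg j k * hx u \<nu> k) * P u j)
      = (\<Sum>j\<in>UNIV. \<Sum>u\<in>UNIV. P u j * (hh u \<nu> * (\<Sum>k\<in>UNIV. dg j k) + (\<Sum>k\<in>UNIV. hx u \<nu> k * gg j k)))"
    by (subst sum_rotate3) (simp add: sum_distrib_left sum.distrib algebra_simps)
  also have "\<dots> = - (\<Sum>j\<in>UNIV. \<Sum>u\<in>UNIV. P u j * hh u \<nu> * tr j)"
  proof -
    have "hh u \<nu> * (\<Sum>k\<in>UNIV. dg j k) + (\<Sum>k\<in>UNIV. hx u \<nu> k * gg j k) = - (hh u \<nu> * tr j)" for u j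
      using base[of u j] by (simp add: tr_def algebra_simps)
    then show ?thesis
      by (simp add: sum_negf mult.assoc)
  qed
  also have "\<dots> = - (\<Sum>s\<in>UNIV. \<Sum>k\<in>UNIV. P s k * hh s \<nu> * tr k)"
    by (subst sum.swap) simp
  finally show ?thesis
    unfolding lhs by simp
qed

lemma fibre_connection_quadratic_identity:
  fixes gg :: "'m::finite \<Rightarrow> 'm \<Rightarrow> real" and hh :: "'n::finite \<Rightarrow> 'n \<Rightarrow> real"
    and Gn :: "'n \<Rightarrow> 'n \<Rightarrow> 'n \<Rightarrow> real" and P :: "'n \<Rightarrow> 'm \<Rightarrow> real"
    and hy :: "'n \<Rightarrow> 'n \<Rightarrow> 'n \<Rightarrow> real"
  assumes g_sym: "\<And>i j. gg i j = gg j i"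
    and Gn_sym: "\<And>s a l. Gn s a l = Gn s l a"
    and metric: "\<And>\<mu> \<nu> \<kappa>. hy \<mu> \<nu> \<kappa> = (\<Sum>s\<in>UNIV. Gn s \<mu> \<kappa> * hh s \<nu>) + (\<Sum>s\<in>UNIV. Gn s \<nu> \<kappa> * hh s \<mu>)"
  shows "(\<Sum>s\<in>UNIV. \<Sum>i\<in>UNIV. \<Sum>j\<in>UNIV. gg i j * hh s \<nu> * (\<Sum>a\<in>UNIV. \<Sum>l\<in>UNIV. Gn s a l * P a i * P l j))
     = -(1/2) * (\<Sum>i\<in>UNIV. \<Sum>j\<in>UNIV. \<Sum>s\<in>UNIV. \<Sum>u\<in>UNIV. gg i j * hy s u \<nu> * P s i * P u j)
       + (\<Sum>k\<in>UNIV. \<Sum>j\<in>UNIV. \<Sum>u\<in>UNIV. gg j k * (\<Sum>l\<in>UNIV. hy u \<nu> l * P l k) * P u j)"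
proof -
  define Q where "Q a l = (\<Sum>i\<in>UNIV. \<Sum>j\<in>UNIV. gg i j * P a i * P l j)" for a l
  define C where "C \<nu> a l = (\<Sum>s\<in>UNIV. Gn s a l * hh s \<nu>)" for \<nu> a l
  have Q_sym: "Q a l = Q l a" for a l
    unfolding Q_def by (subst sum.swap) (simp add: g_sym mult_ac)
  have "(\<Sum>i\<in>UNIV. \<Sum>j\<in>UNIV. gg i j * hh s \<nu> * (\<Sum>a\<in>UNIV. \<Sum>l\<in>UNIV. Gn s a l * P a i * P l j))
      = (\<Sum>a\<in>UNIV. \<Sum>l\<in>UNIV. Gn s a l * hh s \<nu> * Q a l)" for s
  proof -
    have "(\<Sum>i\<in>UNIV. \<Sum>j\<in>UNIV. gg i j * hh s \<nu> * (\<Sum>a\<in>UNIV. \<Sum>l\<in>UNIV. Gn s a l * P a i * P l j))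
        = (\<Sum>i\<in>UNIV. \<Sum>j\<in>UNIV. \<Sum>a\<in>UNIV. \<Sum>l\<in>UNIV. gg i j * (Gn s a l * hh s \<nu>) * P a i * P l j)"
      by (simp add: sum_distrib_left mult_ac)
    then show ?thesis
      by (simp only: sum_quadratic_contract Q_def)
  qed
  then have "(\<Sum>s\<in>UNIV. \<Sum>i\<in>UNIV. \<Sum>j\<in>UNIV. gg i j * hh s \<nu> * (\<Sum>a\<in>UNIV. \<Sum>l\<in>UNIV. Gn s a l * P a i * P l j))
      = (\<Sum>s\<in>UNIV. \<Sum>a\<in>UNIV. \<Sum>l\<in>UNIV. Gn s a l * hh s \<nu> * Q a l)"
    by simp
  also have "\<dots> = (\<Sum>a\<in>UNIV. \<Sum>l\<in>UNIV. \<Sum>s\<in>UNIV. Gn s a l * hh s \<nu> * Q a l)"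
    by (rule sum_rotate3)
  also have "\<dots> = (\<Sum>a\<in>UNIV. \<Sum>l\<in>UNIV. Q a l * C \<nu> a l)"
    by (simp add: C_def sum_distrib_left mult_ac)
  also have "\<dots> = -(1/2) * (\<Sum>s\<in>UNIV. \<Sum>u\<in>UNIV. Q s u * hy s u \<nu>) + (\<Sum>u\<in>UNIV. \<Sum>l\<in>UNIV. Q u l * hy u \<nu> l)"
    by (rule metric_connection_quadratic_identity[OF Q_sym])
      (auto simp: C_def metric Gn_sym)
  also have "(\<Sum>s\<in>UNIV. \<Sum>u\<in>UNIV. Q s u * hy s u \<nu>)
      = (\<Sum>i\<in>UNIV. \<Sum>j\<in>UNIV. \<Sum>s\<in>UNIV. \<Sum>u\<in>UNIV. gg i j * hy s u \<nu> * P s i * P u j)"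
    unfolding Q_def sum_quadratic_contract by (simp add: mult.commute)
  also have "(\<Sum>u\<in>UNIV. \<Sum>l\<in>UNIV. Q u l * hy u \<nu> l)
      = (\<Sum>j\<in>UNIV. \<Sum>k\<in>UNIV. \<Sum>u\<in>UNIV. \<Sum>l\<in>UNIV. gg j k * hy u \<nu> l * P u j * P l k)"
    unfolding Q_def sum_quadratic_contract by (simp add: mult.commute)
  also have "\<dots> = (\<Sum>k\<in>UNIV. \<Sum>j\<in>UNIV. \<Sum>u\<in>UNIV. gg j k * (\<Sum>l\<in>UNIV. hy u \<nu> l * P l k) * P u j)"
    by (subst sum.swap) (simp add: sum_distrib_left sum_distrib_right mult_ac)
  finally show ?thesis .
qed

(* Pointwise form of the main computation: P s i and PP s j i stand for phi^s_i and phi^s_{ji},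
   dg j k for d_k g^{jk}, hx u nu k for d_{x^k} h_{u nu} and hy u nu l for d_{phi^l} h_{u nu}. *)
lemma geodesic_form_identity:
  fixes gg :: "'m::finite \<Rightarrow> 'm \<Rightarrow> real" and hh :: "'n::finite \<Rightarrow> 'n \<Rightarrow> real"
    and Gm :: "'m \<Rightarrow> 'm \<Rightarrow> 'm \<Rightarrow> real" and Gn :: "'n \<Rightarrow> 'n \<Rightarrow> 'n \<Rightarrow> real"
    and P :: "'n \<Rightarrow> 'm \<Rightarrow> real" and PP :: "'n \<Rightarrow> 'm \<Rightarrow> 'm \<Rightarrow> real"
    and dg :: "'m \<Rightarrow> 'm \<Rightarrow> real" and hx :: "'n \<Rightarrow> 'n \<Rightarrow> 'm \<Rightarrow> real"
    and hy :: "'n \<Rightarrow> 'n \<Rightarrow> 'n \<Rightarrow> real"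
  assumes g_sym: "\<And>i j. gg i j = gg j i"
    and Gn_sym: "\<And>s a l. Gn s a l = Gn s l a"
    and metric: "\<And>\<mu> \<nu> \<kappa>. hy \<mu> \<nu> \<kappa> = (\<Sum>s\<in>UNIV. Gn s \<mu> \<kappa> * hh s \<nu>) + (\<Sum>s\<in>UNIV. Gn s \<nu> \<kappa> * hh s \<mu>)"
    and base: "\<And>l \<mu>. hh \<mu> \<nu> * ((\<Sum>i\<in>UNIV. \<Sum>j\<in>UNIV. gg i j * Gm l i j) + (\<Sum>p\<in>UNIV. dg l p))
      = - (\<Sum>p\<in>UNIV. hx \<mu> \<nu> p * gg l p)"
  shows "(\<Sum>s\<in>UNIV. \<Sum>i\<in>UNIV. \<Sum>j\<in>UNIV. gg i j * hh s \<nu> *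
        (PP s j i - (\<Sum>k\<in>UNIV. Gm k i j * P s k) + (\<Sum>a\<in>UNIV. \<Sum>l\<in>UNIV. Gn s a l * P a i * P l j)))
   = -(1/2) * (\<Sum>i\<in>UNIV. \<Sum>j\<in>UNIV. \<Sum>s\<in>UNIV. \<Sum>u\<in>UNIV. gg i j * hy s u \<nu> * P s i * P u j)
     + (\<Sum>k\<in>UNIV. \<Sum>j\<in>UNIV. \<Sum>u\<in>UNIV.
          (dg j k * hh u \<nu> + gg j k * (hx u \<nu> k + (\<Sum>l\<in>UNIV. hy u \<nu> l * P l k))) * P u j
          + gg j k * hh u \<nu> * PP u j k)"
proof -
  have second_order: "(\<Sum>s\<in>UNIV. \<Sum>i\<in>UNIV. \<Sum>j\<in>UNIV. gg i j * hh s \<nu> * PP s j i)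
      = (\<Sum>k\<in>UNIV. \<Sum>j\<in>UNIV. \<Sum>u\<in>UNIV. gg j k * hh u \<nu> * PP u j k)"
    by (subst sum_rotate3) (simp add: g_sym)
  show ?thesis
    using second_order base_connection_trace_identity[of hh \<nu> gg Gm dg hx P, OF base]
      fibre_connection_quadratic_identity[of gg Gn hy hh \<nu> P, OF g_sym Gn_sym metric]
    by (simp add: right_diff_distrib distrib_left distrib_right sum.distrib sum_subtractf)
qed

section \<open>The energy Lagrangian and its Euler-Lagrange expressions\<close>

definition energy_lagrangian ::
  "(real^'m \<Rightarrow> 'm \<Rightarrow> 'm \<Rightarrow> real) \<Rightarrow> (real^'m \<Rightarrow> real^'n \<Rightarrow> 'n \<Rightarrow> 'n \<Rightarrow> real)
   \<Rightarrow> ((real^'m) \<times> (real^'n)) \<times> ((real^'n)^'m) \<Rightarrow> real" where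
  "energy_lagrangian g h = (\<lambda>((x, y), p). -(1/2) * (\<Sum>i\<in>UNIV. \<Sum>j\<in>UNIV. \<Sum>s\<in>UNIV. \<Sum>u\<in>UNIV.
      g x i j * h x y s u * (p $ i $ s) * (p $ j $ u)))"

lemma energy_lagrangian_apply:
  "energy_lagrangian g h ((x, y), p) = -(1/2) * (\<Sum>i\<in>UNIV. \<Sum>j\<in>UNIV. \<Sum>s\<in>UNIV. \<Sum>u\<in>UNIV.
      g x i j * h x y s u * (p $ i $ s) * (p $ j $ u))"
  by (simp add: energy_lagrangian_def)

lemma smooth_on_energy_lagrangian:
  fixes g :: "real^'m \<Rightarrow> 'm \<Rightarrow> 'm \<Rightarrow> real" and h :: "real^'m \<Rightarrow> real^'n \<Rightarrow> 'n \<Rightarrow> 'n \<Rightarrow> real"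
  assumes U: "open U" and V: "open V"
    and g: "\<And>i j. smooth_on U (\<lambda>x. g x i j)"
    and h: "\<And>s u. smooth_on (U \<times> V) (\<lambda>(x, y). h x y s u)"
  shows "smooth_on ((U \<times> V) \<times> UNIV) (energy_lagrangian g h)"
proof -
  let ?S = "(U \<times> V) \<times> (UNIV :: ((real^'n)^'m) set)"
  let ?B = "{f. smooth_on ?S f}"
  have S: "open ?S" using U V by (simp add: open_Times)
  have "smooth_on ?S (\<lambda>q. g (fst (fst q)) i j)" for i j
    using S U by (rule smooth_on_compose_linear[OF _ _ _ _ g]) (auto simp: linear_iff)
  then have G: "(\<lambda>q. g (fst (fst q)) i j) \<in> poly_closure ?B" for i j
    by (intro poly_closure.base) simp
  have "smooth_on ?S (\<lambda>q. (\<lambda>(x, y). h x y s u) (fst q))" for s u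
    using S U V by (intro smooth_on_compose_linear[OF _ _ _ _ h]) (auto simp: linear_iff open_Times)
  then have H: "(\<lambda>q. h (fst (fst q)) (snd (fst q)) s u) \<in> poly_closure ?B" for s u
    by (intro poly_closure.base) (simp add: case_prod_beta)
  have "smooth_on ?S (\<lambda>q. snd q $ i $ s)" for i s
    using S by (rule smooth_on_linear) (simp add: linear_iff)
  then have P: "(\<lambda>q. snd q $ i $ s) \<in> poly_closure ?B" for i s
    by (intro poly_closure.base) simp
  have "energy_lagrangian g h = (\<lambda>q. -(1/2) * (\<Sum>i\<in>UNIV. \<Sum>j\<in>UNIV. \<Sum>s\<in>UNIV. \<Sum>u\<in>UNIV.
      g (fst (fst q)) i j * h (fst (fst q)) (snd (fst q)) s u * (snd q $ i $ s) * (snd q $ j $ u)))"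
    by (simp add: fun_eq_iff split_paired_all energy_lagrangian_apply)
  also have "\<dots> \<in> poly_closure ?B"
    by (intro poly_closure.mult poly_closure.const poly_closure_sum G H P) simp_all
  finally show ?thesis
    by (rule smooth_on_poly_closure_of_smooth[OF S])
qed

lemma dirderiv_energy_lagrangian_fibre:
  assumes "\<And>s u. (\<lambda>y'. h x y' s u) differentiable at y"
  shows "dirderiv (energy_lagrangian g h) ((0, axis \<nu> 1), 0) ((x, y), p) =
     -(1/2) * (\<Sum>i\<in>UNIV. \<Sum>j\<in>UNIV. \<Sum>s\<in>UNIV. \<Sum>u\<in>UNIV.
        g x i j * pd (\<lambda>y'. h x y' s u) \<nu> y * (p $ i $ s) * (p $ j $ u))"
proof -
  have "((\<lambda>t. h x (y + t *\<^sub>R axis \<nu> 1) s u) has_real_derivative pd (\<lambda>y'. h x y' s u) \<nu> y) (at 0)" for s u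
    unfolding pd_def by (rule has_real_derivative_dirderiv[OF assms])
  then have "((\<lambda>t. -(1/2) * (\<Sum>i\<in>UNIV. \<Sum>j\<in>UNIV. \<Sum>s\<in>UNIV. \<Sum>u\<in>UNIV.
        g x i j * h x (y + t *\<^sub>R axis \<nu> 1) s u * (p $ i $ s) * (p $ j $ u))) has_real_derivative
      -(1/2) * (\<Sum>i\<in>UNIV. \<Sum>j\<in>UNIV. \<Sum>s\<in>UNIV. \<Sum>u\<in>UNIV.
        g x i j * pd (\<lambda>y'. h x y' s u) \<nu> y * (p $ i $ s) * (p $ j $ u))) (at 0)"
    by (intro DERIV_cmult DERIV_sum DERIV_cmult_right)
  then show ?thesis
    unfolding dirderiv_def by (simp add: energy_lagrangian_apply DERIV_imp_deriv)
qed

lemma dirderiv_energy_lagrangian_velocity: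
  fixes g :: "real^'m \<Rightarrow> 'm \<Rightarrow> 'm \<Rightarrow> real" and h :: "real^'m \<Rightarrow> real^'n \<Rightarrow> 'n \<Rightarrow> 'n \<Rightarrow> real"
  assumes g_sym: "\<And>i j. g x i j = g x j i" and h_sym: "\<And>s u. h x y s u = h x y u s"
  shows "dirderiv (energy_lagrangian g h) ((0, 0), axis k (axis \<nu> 1)) ((x, y), p) =
     -(\<Sum>j\<in>UNIV. \<Sum>u\<in>UNIV. g x j k * h x y u \<nu> * (p $ j $ u))"
proof -
  define e :: "(real^'n)^'m" where "e = axis k (axis \<nu> 1)"
  have "((\<lambda>t. -(1/2) * (\<Sum>i\<in>UNIV. \<Sum>j\<in>UNIV. \<Sum>s\<in>UNIV. \<Sum>u\<in>UNIV.
        g x i j * h x y s u * (p $ i $ s + t * e $ i $ s) * (p $ j $ u + t * e $ j $ u))) has_real_derivative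
      -(1/2) * (\<Sum>i\<in>UNIV. \<Sum>j\<in>UNIV. \<Sum>s\<in>UNIV. \<Sum>u\<in>UNIV.
        g x i j * h x y s u * (e $ i $ s * p $ j $ u + p $ i $ s * e $ j $ u))) (at 0)"
    by (auto intro!: derivative_eq_intros simp: algebra_simps)
  moreover have "(\<Sum>i\<in>UNIV. \<Sum>j\<in>UNIV. \<Sum>s\<in>UNIV. \<Sum>u\<in>UNIV.
        g x i j * h x y s u * (e $ i $ s * p $ j $ u + p $ i $ s * e $ j $ u))
      = (\<Sum>j\<in>UNIV. \<Sum>u\<in>UNIV. g x k j * h x y \<nu> u * p $ j $ u)
        + (\<Sum>i\<in>UNIV. \<Sum>s\<in>UNIV. g x i k * h x y s \<nu> * p $ i $ s)"
    unfolding e_def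
    by (simp add: axis_def distrib_left sum.distrib if_distrib[of "\<lambda>v. v $ _"]
        if_distrib[of "\<lambda>r. r * _"] if_distrib[of "\<lambda>r. _ * r"] sum_if_zero cong: if_cong)
  ultimately show ?thesis
    unfolding dirderiv_def e_def[symmetric]
    by (simp add: energy_lagrangian_apply DERIV_imp_deriv g_sym[of k] h_sym[of \<nu>])
qed

lemma pd_momentum_energy_lagrangian:
  fixes g :: "real^'m \<Rightarrow> 'm \<Rightarrow> 'm \<Rightarrow> real" and h :: "real^'m \<Rightarrow> real^'n \<Rightarrow> 'n \<Rightarrow> 'n \<Rightarrow> real"
    and \<gamma> :: "real^'m \<Rightarrow> real^'n"
  assumes Q: "open Q" "x \<in> Q"
    and g_sym: "\<forall>z\<in>Q. \<forall>i j. g z i j = g z j i"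
    and h_sym: "\<forall>z\<in>Q. \<forall>s u. h z (\<gamma> z) s u = h z (\<gamma> z) u s"
    and g_diff: "\<And>i j. (\<lambda>z. g z i j) differentiable at x"
    and h_diff: "\<And>s u. (\<lambda>(z, y). h z y s u) differentiable at (x, \<gamma> x)"
    and \<gamma>_diff: "\<And>s. (\<lambda>z. \<gamma> z $ s) differentiable at x"
    and d\<gamma>_diff: "\<And>s i. pd (\<lambda>z. \<gamma> z $ s) i differentiable at x"
  shows "pd (\<lambda>z. dirderiv (energy_lagrangian g h) ((0, 0), axis k (axis \<nu> 1)) (jet1 \<gamma> z)) k x =
     - (\<Sum>j\<in>UNIV. \<Sum>u\<in>UNIV.
          (pd (\<lambda>z. g z j k) k x * h x (\<gamma> x) u \<nu>
           + g x j k * (pd (\<lambda>z. h z (\<gamma> x) u \<nu>) k x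
                        + (\<Sum>l\<in>UNIV. pd (\<lambda>y. h x y u \<nu>) l (\<gamma> x) * pd (\<lambda>z. \<gamma> z $ l) k x)))
            * pd (\<lambda>z. \<gamma> z $ u) j x
          + g x j k * h x (\<gamma> x) u \<nu> * pd (pd (\<lambda>z. \<gamma> z $ u) j) k x)"
    (is "_ = ?rhs")
proof -
  let ?line = "\<lambda>t. x + t *\<^sub>R axis k 1"
  have "dirderiv (energy_lagrangian g h) ((0, 0), axis k (axis \<nu> 1)) (jet1 \<gamma> z)
      = - (\<Sum>j\<in>UNIV. \<Sum>u\<in>UNIV. g z j k * h z (\<gamma> z) u \<nu> * pd (\<lambda>w. \<gamma> w $ u) j z)" if "z \<in> Q" for z
    using dirderiv_energy_lagrangian_velocity[of g z h "\<gamma> z"] g_sym h_sym that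
    by (simp add: jet1_def)
  then have "pd (\<lambda>z. dirderiv (energy_lagrangian g h) ((0, 0), axis k (axis \<nu> 1)) (jet1 \<gamma> z)) k x
      = pd (\<lambda>z. - (\<Sum>j\<in>UNIV. \<Sum>u\<in>UNIV. g z j k * h z (\<gamma> z) u \<nu> * pd (\<lambda>w. \<gamma> w $ u) j z)) k x"
    by (rule pd_cong[OF Q])
  also have "\<dots> = ?rhs"
  proof (rule pd_eqI)
    have dg: "((\<lambda>t. g (?line t) j k) has_real_derivative pd (\<lambda>z. g z j k) k x) (at 0)" for j
      unfolding pd_def by (rule has_real_derivative_dirderiv[OF g_diff])
    have dh: "((\<lambda>t. h (?line t) (\<gamma> (?line t)) u \<nu>) has_real_derivative
        pd (\<lambda>z. h z (\<gamma> x) u \<nu>) k x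
        + (\<Sum>l\<in>UNIV. pd (\<lambda>y. h x y u \<nu>) l (\<gamma> x) * pd (\<lambda>z. \<gamma> z $ l) k x)) (at 0)" for u
      using has_real_derivative_along_section[OF h_diff \<gamma>_diff, where k=k] by simp
    have dP: "((\<lambda>t. pd (\<lambda>w. \<gamma> w $ u) j (?line t)) has_real_derivative
        pd (pd (\<lambda>z. \<gamma> z $ u) j) k x) (at 0)" for u j
      unfolding pd_def[of "pd _ _"] by (rule has_real_derivative_dirderiv[OF d\<gamma>_diff])
    show "((\<lambda>t. - (\<Sum>j\<in>UNIV. \<Sum>u\<in>UNIV. g (?line t) j k * h (?line t) (\<gamma> (?line t)) u \<nu>
              * pd (\<lambda>w. \<gamma> w $ u) j (?line t))) has_real_derivative ?rhs) (at 0)"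
      by (intro DERIV_minus DERIV_sum, rule DERIV_cong[OF DERIV_mult[OF DERIV_mult[OF dg dh] dP]])
        (simp add: algebra_simps)
  qed
  finally show ?thesis .
qed

lemma EL_energy_lagrangian:
  fixes g :: "real^'m \<Rightarrow> 'm \<Rightarrow> 'm \<Rightarrow> real" and h :: "real^'m \<Rightarrow> real^'n \<Rightarrow> 'n \<Rightarrow> 'n \<Rightarrow> real"
    and \<gamma> :: "real^'m \<Rightarrow> real^'n"
  assumes Q: "open Q" "x \<in> Q"
    and g_sym: "\<forall>z\<in>Q. \<forall>i j. g z i j = g z j i"
    and h_sym: "\<forall>z\<in>Q. \<forall>s u. h z (\<gamma> z) s u = h z (\<gamma> z) u s"
    and g_diff: "\<And>i j. (\<lambda>z. g z i j) differentiable at x"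
    and h_diff: "\<And>s u. (\<lambda>(z, y). h z y s u) differentiable at (x, \<gamma> x)"
    and \<gamma>_diff: "\<And>s. (\<lambda>z. \<gamma> z $ s) differentiable at x"
    and d\<gamma>_diff: "\<And>s i. pd (\<lambda>z. \<gamma> z $ s) i differentiable at x"
  shows "EL (energy_lagrangian g h) \<gamma> \<nu> x =
     -(1/2) * (\<Sum>i\<in>UNIV. \<Sum>j\<in>UNIV. \<Sum>s\<in>UNIV. \<Sum>u\<in>UNIV.
        g x i j * pd (\<lambda>y. h x y s u) \<nu> (\<gamma> x) * pd (\<lambda>z. \<gamma> z $ s) i x * pd (\<lambda>z. \<gamma> z $ u) j x)
     + (\<Sum>k\<in>UNIV. \<Sum>j\<in>UNIV. \<Sum>u\<in>UNIV.
          (pd (\<lambda>z. g z j k) k x * h x (\<gamma> x) u \<nu>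
           + g x j k * (pd (\<lambda>z. h z (\<gamma> x) u \<nu>) k x
                        + (\<Sum>l\<in>UNIV. pd (\<lambda>y. h x y u \<nu>) l (\<gamma> x) * pd (\<lambda>z. \<gamma> z $ l) k x)))
            * pd (\<lambda>z. \<gamma> z $ u) j x
          + g x j k * h x (\<gamma> x) u \<nu> * pd (pd (\<lambda>z. \<gamma> z $ u) j) k x)"
proof -
  have "(\<lambda>y. h x y s u) differentiable at (\<gamma> x)" for s u
  proof -
    have "((\<lambda>y. (x, y)) has_derivative (\<lambda>w. (0, w))) (at (\<gamma> x))"
      by (intro has_derivative_Pair has_derivative_const has_derivative_ident)
    then have "(\<lambda>y. (x, y)) differentiable at (\<gamma> x)"
      unfolding differentiable_def by blast
    from differentiable_chain_at[OF this h_diff[of s u]] show ?thesis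
      by (simp add: o_def)
  qed
  then show ?thesis
    using dirderiv_energy_lagrangian_fibre[of h x "\<gamma> x"]
      pd_momentum_energy_lagrangian[OF assms]
    by (simp add: EL_def jet1_def sum_negf)
qed

lemma geodesic_form_eq_EL_energy_lagrangian:
  fixes GM :: "real^'m \<Rightarrow> 'm \<Rightarrow> 'm \<Rightarrow> 'm \<Rightarrow> real" and GN :: "real^'n \<Rightarrow> 'n \<Rightarrow> 'n \<Rightarrow> 'n \<Rightarrow> real"
    and g :: "real^'m \<Rightarrow> 'm \<Rightarrow> 'm \<Rightarrow> real" and h :: "real^'m \<Rightarrow> real^'n \<Rightarrow> 'n \<Rightarrow> 'n \<Rightarrow> real"
    and \<gamma> :: "real^'m \<Rightarrow> real^'n"
  assumes U: "open U" and V: "open V"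
    and GN_sym: "\<And>y s a l. y \<in> V \<Longrightarrow> GN y s a l = GN y s l a"
    and g_smooth: "\<And>i j. smooth_on U (\<lambda>x. g x i j)"
    and g_sym: "\<And>x i j. x \<in> U \<Longrightarrow> g x i j = g x j i"
    and h_smooth: "\<And>s v. smooth_on (U \<times> V) (\<lambda>(x, y). h x y s v)"
    and h_sym: "\<And>x y s v. x \<in> U \<Longrightarrow> y \<in> V \<Longrightarrow> h x y s v = h x y v s"
    and metric_N: "\<And>x y \<mu> \<nu> la. x \<in> U \<Longrightarrow> y \<in> V \<Longrightarrow>
        pd (\<lambda>y'. h x y' \<mu> \<nu>) la y
          = (\<Sum>s\<in>UNIV. GN y s \<mu> la * h x y s \<nu>) + (\<Sum>s\<in>UNIV. GN y s \<nu> la * h x y s \<mu>)"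
    and base_cond: "\<And>x y l \<mu> \<nu>. x \<in> U \<Longrightarrow> y \<in> V \<Longrightarrow>
        h x y \<mu> \<nu> * ((\<Sum>i\<in>UNIV. \<Sum>j\<in>UNIV. g x i j * GM x l i j) + (\<Sum>p\<in>UNIV. pd (\<lambda>x'. g x' l p) p x))
          = - (\<Sum>p\<in>UNIV. pd (\<lambda>x'. h x' y \<mu> \<nu>) p x * g x l p)"
    and Q: "open Q" "x \<in> Q"
    and \<gamma>: "\<And>s. smooth_on Q (\<lambda>z. \<gamma> z $ s)"
    and graph: "\<And>z. z \<in> Q \<Longrightarrow> (z, \<gamma> z) \<in> U \<times> V"
  shows "geodesic_form g h GM GN \<gamma> \<nu> x = EL (energy_lagrangian g h) \<gamma> \<nu> x"
proof -
  have x: "x \<in> U" "\<gamma> x \<in> V" using graph[OF Q(2)] by auto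
  have g_sym_Q: "\<forall>z\<in>Q. \<forall>i j. g z i j = g z j i"
    using graph g_sym by blast
  have h_sym_Q: "\<forall>z\<in>Q. \<forall>s u. h z (\<gamma> z) s u = h z (\<gamma> z) u s"
    using graph h_sym by blast
  have g_diff: "(\<lambda>z. g z i j) differentiable at x" for i j
    using smooth_on_imp_differentiable[OF g_smooth U x(1)] .
  have h_diff: "(\<lambda>(z, y). h z y s u) differentiable at (x, \<gamma> x)" for s u
    using smooth_on_imp_differentiable[OF h_smooth open_Times[OF U V]] x by blast
  have \<gamma>_diff: "(\<lambda>z. \<gamma> z $ s) differentiable at x" for s
    using smooth_on_imp_differentiable[OF \<gamma> Q] .
  have d\<gamma>_diff: "pd (\<lambda>z. \<gamma> z $ s) i differentiable at x" for s i
    unfolding pd_def using smooth_on_imp_differentiable[OF smooth_on_dirderiv[OF \<gamma>] Q] by simp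
  note EL_eq = EL_energy_lagrangian[OF Q g_sym_Q h_sym_Q g_diff h_diff \<gamma>_diff d\<gamma>_diff]
  show ?thesis
    unfolding geodesic_form_def EL_eq
    by (rule geodesic_form_identity)
      (use g_sym[OF x(1)] GN_sym[OF x(2)] metric_N[OF x] base_cond[OF x] in auto)
qed

theorem mainTheorem1:
  fixes U :: "(real^'m) set" and V :: "(real^'n) set"
    and GM :: "real^'m \<Rightarrow> 'm \<Rightarrow> 'm \<Rightarrow> 'm \<Rightarrow> real"
    and GN :: "real^'n \<Rightarrow> 'n \<Rightarrow> 'n \<Rightarrow> 'n \<Rightarrow> real"
    and g :: "real^'m \<Rightarrow> 'm \<Rightarrow> 'm \<Rightarrow> real"
    and h :: "real^'m \<Rightarrow> real^'n \<Rightarrow> 'n \<Rightarrow> 'n \<Rightarrow> real"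
  assumes U: "open U" and V: "open V"
    and GM_smooth: "\<And>k i j. smooth_on U (\<lambda>x. GM x k i j)"
    and GM_sym: "\<And>x k i j. x \<in> U \<Longrightarrow> GM x k i j = GM x k j i"
    and GN_smooth: "\<And>s a l. smooth_on V (\<lambda>y. GN y s a l)"
    and GN_sym: "\<And>y s a l. y \<in> V \<Longrightarrow> GN y s a l = GN y s l a"
    and g_smooth: "\<And>i j. smooth_on U (\<lambda>x. g x i j)"
    and g_sym: "\<And>x i j. x \<in> U \<Longrightarrow> g x i j = g x j i"
    and g_nondeg: "\<And>x. x \<in> U \<Longrightarrow> det (\<chi> i j. g x i j) \<noteq> 0"
    and h_smooth: "\<And>s v. smooth_on (U \<times> V) (\<lambda>(x, y). h x y s v)"
    and h_sym: "\<And>x y s v. x \<in> U \<Longrightarrow> y \<in> V \<Longrightarrow> h x y s v = h x y v s"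
    and h_nondeg: "\<And>x y. x \<in> U \<Longrightarrow> y \<in> V \<Longrightarrow> det (\<chi> s v. h x y s v) \<noteq> 0"
    and metric_N: "\<And>x y \<mu> \<nu> la. x \<in> U \<Longrightarrow> y \<in> V \<Longrightarrow>
        pd (\<lambda>y'. h x y' \<mu> \<nu>) la y
          = (\<Sum>s\<in>UNIV. GN y s \<mu> la * h x y s \<nu>) + (\<Sum>s\<in>UNIV. GN y s \<nu> la * h x y s \<mu>)"
    and base_cond: "\<And>x y l \<mu> \<nu>. x \<in> U \<Longrightarrow> y \<in> V \<Longrightarrow>
        h x y \<mu> \<nu> * ((\<Sum>i\<in>UNIV. \<Sum>j\<in>UNIV. g x i j * GM x l i j) + (\<Sum>p\<in>UNIV. pd (\<lambda>x'. g x' l p) p x))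
          = - (\<Sum>p\<in>UNIV. pd (\<lambda>x'. h x' y \<mu> \<nu>) p x * g x l p)"
  shows "locally_variational U V (geodesic_form g h GM GN)"
  unfolding locally_variational_def
proof (intro ballI exI conjI allI impI)
  show "open (U \<times> V)"
    using U V by (rule open_Times)
  show "(x0, y0) \<in> U \<times> V" if "x0 \<in> U" "y0 \<in> V" for x0 y0
    using that by simp
  show "U \<times> V \<subseteq> U \<times> V"
    by (rule subset_refl)
  show "smooth_on ((U \<times> V) \<times> UNIV) (energy_lagrangian g h)"
    using U V g_smooth h_smooth by (rule smooth_on_energy_lagrangian)
  show "geodesic_form g h GM GN \<gamma> \<nu> x = EL (energy_lagrangian g h) \<gamma> \<nu> x"
    if "open Q \<and> x \<in> Q \<and> (\<forall>s. smooth_on Q (\<lambda>z. \<gamma> z $ s)) \<and> (\<forall>z\<in>Q. (z, \<gamma> z) \<in> U \<times> V)"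
    for \<gamma> Q x \<nu>
    by (rule geodesic_form_eq_EL_energy_lagrangian[OF U V GN_sym g_smooth g_sym h_smooth h_sym
          metric_N base_cond]) (use that in auto)
qed

end
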